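(* For a multi-unit auction with $2$ bidders and $2$ identical items, where bidders have valuations with decreasing marginal values, no deterministic obviously strategy-proof mechanism that satisfies individual rationality and no negative transfers gives an approximation better than $2$; i.e., for every such mechanism there is a valuation profile $v$ with $\mathrm{OPT}(v)\ge 2\cdot W(v)$, or the ratio $\mathrm{OPT}(v)/W(v)$ has supremum at least $2$.
   Context: Bidder $i$'s valuation is $v_i:\{0,1,2\}\to\mathbb{R}_{\ge0}$ with $v_i(0)=0$ and decreasing marginals: $v_i(1)-v_i(0)\ge v_i(2)-v_i(1)$. The domain $V_i$ is all such valuations; valuations are private, utilities quasi-linear. A deterministic mechanism is a rooted tree: each internal node is assigned to one bidder, who sends one of the messages labeling the outgoing edges; each leaf is labeled with a feasible allocation and a payment per bidder. A behavior $B_i$ specifies a message at every node of bidder $i$; a profile $B$ determines a path $\mathrm{Path}(B)$ with allocation $f_i(B)$ and payment $p_i(B)$. A strategy $\mathcal S_i$ maps each $v_i\in V_i$ to a behavior; it is obviously dominant if for every $v_i\in V_i$, every node $u$ of $i$, every $B_{-i}$ and every profile $B'$ with $u\in\mathrm{Path}(\mathcal S_i(v_i),B_{-i})\cap\mathrm{Path}(B')$ and $B'_i$ sending at $u$ a message different from $\mathcal S_i(v_i)$'s, $v_i(f_i(\mathcal S_i(v_i),B_{-i}))-p_i(\mathcal S_i(v_i),B_{-i})\ge v_i(f_i(B'))-p_i(B')$. The mechanism is OSP if all strategies are obviously dominant; individually rational if for every profile in $V_1\times V_2$ following the strategies gives each bidder utility $\ge0$; satisfies no negative transfers if all payments at all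 leaves are $\ge0$. $W(v)$ is the welfare of the allocation reached on profile $v$ when bidders follow their strategies, $\mathrm{OPT}(v)$ the optimal welfare; approximation better than $2$ means $\sup_v\mathrm{OPT}(v)/W(v)<2$. *)

theory Defs
  imports Complex_Main
begin

text \<open>Two bidders, indexed by bool (False = bidder 1, True = bidder 2); two identical items.
  A mechanism is a rooted tree; internal nodes belong to a bidder and carry the set of
  messages labelling the outgoing edges; leaves carry an allocation (number of items per
  bidder) and a payment per bidder.\<close>

datatype 'm mech =
    Leaf "bool \<Rightarrow> nat" "bool \<Rightarrow> real"
  | Node bool "'m set" "'m \<Rightarrow> 'm mech"

text \<open>Nodes are identified by the history (list of messages) leading to them from the root.\<close>
fun subtree :: "'m mech \<Rightarrow> 'm list \<Rightarrow> 'm mech option" where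
  "subtree t [] = Some t"
| "subtree (Leaf a p) (m # h) = None"
| "subtree (Node i M c) (m # h) = (if m \<in> M then subtree (c m) h else None)"

definition wf_mech :: "'m mech \<Rightarrow> bool" where
  "wf_mech t \<longleftrightarrow>
     (\<forall>h a p. subtree t h = Some (Leaf a p) \<longrightarrow> a False + a True \<le> 2) \<and>
     (\<forall>h i M c. subtree t h = Some (Node i M c) \<longrightarrow> M \<noteq> {})"

type_synonym 'm behavior = "'m list \<Rightarrow> 'm"
type_synonym 'm profile = "bool \<Rightarrow> 'm behavior"

definition valid_beh :: "'m mech \<Rightarrow> bool \<Rightarrow> 'm behavior \<Rightarrow> bool" where
  "valid_beh t i b \<longleftrightarrow> (\<forall>h M c. subtree t h = Some (Node i M c) \<longrightarrow> b h \<in> M)"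

definition valid_profile :: "'m mech \<Rightarrow> 'm profile \<Rightarrow> bool" where
  "valid_profile t B \<longleftrightarrow> (\<forall>i. valid_beh t i (B i))"

primrec run :: "'m mech \<Rightarrow> 'm list \<Rightarrow> 'm profile \<Rightarrow> (bool \<Rightarrow> nat) \<times> (bool \<Rightarrow> real)" where
  "run (Leaf a p) = (\<lambda>h B. (a, p))"
| "run (Node i M c) = (\<lambda>h B. (run \<circ> c) (B i h) (h @ [B i h]) B)"

primrec path_nodes :: "'m mech \<Rightarrow> 'm list \<Rightarrow> 'm profile \<Rightarrow> 'm list set" where
  "path_nodes (Leaf a p) = (\<lambda>h B. {})"
| "path_nodes (Node i M c) = (\<lambda>h B. insert h ((path_nodes \<circ> c) (B i h) (h @ [B i h]) B))"

definition alloc :: "'m mech \<Rightarrow> 'm profile \<Rightarrow> bool \<Rightarrow> nat" where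
  "alloc t B = fst (run t [] B)"

definition pay :: "'m mech \<Rightarrow> 'm profile \<Rightarrow> bool \<Rightarrow> real" where
  "pay t B = snd (run t [] B)"

definition Path :: "'m mech \<Rightarrow> 'm profile \<Rightarrow> 'm list set" where
  "Path t B = path_nodes t [] B"

text \<open>Valuations v : {0,1,2} \<rightarrow> R>=0 with v 0 = 0 and decreasing marginals, represented as
  functions on nat that vanish above 2.\<close>
definition valuation :: "(nat \<Rightarrow> real) \<Rightarrow> bool" where
  "valuation v \<longleftrightarrow> v 0 = 0 \<and> 0 \<le> v 1 \<and> 0 \<le> v 2 \<and> v 1 - v 0 \<ge> v 2 - v 1 \<and>
                    (\<forall>n>2. v n = 0)"

definition utility :: "'m mech \<Rightarrow> (nat \<Rightarrow> real) \<Rightarrow> bool \<Rightarrow> 'm profile \<Rightarrow> real" where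
  "utility t v i B = v (alloc t B i) - pay t B i"

type_synonym 'm strategies = "bool \<Rightarrow> (nat \<Rightarrow> real) \<Rightarrow> 'm behavior"

definition strategies_valid :: "'m mech \<Rightarrow> 'm strategies \<Rightarrow> bool" where
  "strategies_valid t S \<longleftrightarrow> (\<forall>i v. valuation v \<longrightarrow> valid_beh t i (S i v))"

definition OSP :: "'m mech \<Rightarrow> 'm strategies \<Rightarrow> bool" where
  "OSP t S \<longleftrightarrow>
    (\<forall>i v h M c B B'.
       valuation v \<longrightarrow> subtree t h = Some (Node i M c) \<longrightarrow>
       valid_profile t B \<longrightarrow> valid_profile t B' \<longrightarrow>
       h \<in> Path t (B(i := S i v)) \<longrightarrow> h \<in> Path t B' \<longrightarrow>
       B' i h \<noteq> S i v h \<longrightarrow>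
       utility t v i (B(i := S i v)) \<ge> utility t v i B')"

definition follow :: "'m strategies \<Rightarrow> (bool \<Rightarrow> nat \<Rightarrow> real) \<Rightarrow> 'm profile" where
  "follow S vp = (\<lambda>j. S j (vp j))"

definition indiv_rational :: "'m mech \<Rightarrow> 'm strategies \<Rightarrow> bool" where
  "indiv_rational t S \<longleftrightarrow>
    (\<forall>vp. (\<forall>j. valuation (vp j)) \<longrightarrow> (\<forall>i. utility t (vp i) i (follow S vp) \<ge> 0))"

definition no_negative_transfers :: "'m mech \<Rightarrow> bool" where
  "no_negative_transfers t \<longleftrightarrow> (\<forall>h a p. subtree t h = Some (Leaf a p) \<longrightarrow> (\<forall>j. p j \<ge> 0))"

definition welfare :: "'m mech \<Rightarrow> 'm strategies \<Rightarrow> (bool \<Rightarrow> nat \<Rightarrow> real) \<Rightarrow> real" where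
  "welfare t S vp = vp False (alloc t (follow S vp) False) + vp True (alloc t (follow S vp) True)"

definition OPT :: "(bool \<Rightarrow> nat \<Rightarrow> real) \<Rightarrow> real" where
  "OPT vp = Max ((\<lambda>(a, b). vp False a + vp True b) ` {(a, b). a + b \<le> (2::nat)})"

end

theory Submission
  imports Defs
begin

text \<open>Suppose the mechanism achieves \<open>OPT \<le> c \<cdot> W\<close> with \<open>c < 2\<close>.  Against an additive bidder
  with per-item value \<open>T = 2s/(2 - c)\<close>, an additive bidder with per-item value \<open>s\<close> must get
  nothing, so without negative transfers its utility is at most 0.  Against an additive bidder
  with per-item value \<open>z(1)/4\<close>, a bidder with valuation \<open>z\<close>, \<open>z(1) > 0\<close>, must get an item, at a
  price that \<open>z\<close> can afford by individual rationality.  Hence if \<open>s\<close> exceeds the marginals of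
  \<open>z\<close>, the \<open>s\<close>-bidder would gain from mimicking \<open>z\<close> at any node where their messages differ,
  which obvious strategy-proofness forbids.  So along the common path of all profiles with
  positive marginal values every bidder sends one message, and all these profiles reach the
  same leaf.  But the profiles \<open>(s, T)\<close> and \<open>(T, s)\<close> give nothing to bidder 1 and bidder 2
  respectively, so that leaf allocates no item at all, contradicting the approximation.\<close>

lemma subtree_append:
  "subtree t h = Some u \<Longrightarrow> subtree t (h @ g) = subtree u g"
proof (induction h arbitrary: t)
  case Nil
  then show ?case by simp
next
  case (Cons m h)
  then show ?case by (cases t) (auto split: if_splits)
qed

lemma run_reaches_leaf:
  assumes "valid_profile t B" and "subtree t g = Some u"
  shows "\<exists>h. subtree t h = Some (Leaf (fst (run u g B)) (snd (run u g B)))"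
  using assms(2)
proof (induction u arbitrary: g)
  case (Leaf a p)
  then show ?case by auto
next
  case (Node i M c)
  have "B i g \<in> M"
    using assms(1) Node.prems by (auto simp: valid_profile_def valid_beh_def)
  then have "subtree t (g @ [B i g]) = Some (c (B i g))"
    using subtree_append[OF Node.prems, of "[B i g]"] by simp
  from Node.IH[OF rangeI this] show ?case by simp
qed

lemma outcome_at_leaf:
  assumes "valid_profile t B"
  shows "\<exists>h. subtree t h = Some (Leaf (alloc t B) (pay t B))"
  using run_reaches_leaf[OF assms, of "[]" t] by (simp add: alloc_def pay_def)

lemma alloc_feasible:
  assumes "wf_mech t" and "valid_profile t B"
  shows "alloc t B i + alloc t B (\<not> i) \<le> 2"
  using outcome_at_leaf[OF assms(2)] assms(1) unfolding wf_mech_def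
  by (cases i) (auto simp: add.commute)

lemma pay_nonneg:
  assumes "no_negative_transfers t" and "valid_profile t B"
  shows "0 \<le> pay t B j"
  using outcome_at_leaf[OF assms(2)] assms(1) unfolding no_negative_transfers_def by blast

lemma valid_profile_follow:
  assumes "strategies_valid t S" and "\<forall>j. valuation (vp j)"
  shows "valid_profile t (follow S vp)"
  using assms by (auto simp: strategies_valid_def valid_profile_def follow_def)

lemma run_eq_if_messages_agree:
  assumes valid: "\<And>B. B \<in> P \<Longrightarrow> valid_profile t B"
    and agree: "\<And>h i M c B B'. subtree t h = Some (Node i M c) \<Longrightarrow> \<forall>B\<in>P. h \<in> Path t B \<Longrightarrow>
                  B \<in> P \<Longrightarrow> B' \<in> P \<Longrightarrow> B i h = B' i h"
    and "B \<in> P" "B' \<in> P"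
  shows "run t [] B = run t [] B'"
proof -
  have same_below: "run u h B = run u h B'"
    if "subtree t h = Some u"
      and "\<forall>B\<in>P. run t [] B = run u h B \<and> path_nodes u h B \<subseteq> Path t B"
      and "B \<in> P" "B' \<in> P"
    for u h B B'
    using that
  proof (induction u arbitrary: h B B')
    case (Leaf a p)
    then show ?case by simp
  next
    case (Node i M c)
    define m where "m = B i h"
    have on_paths: "\<forall>B\<in>P. h \<in> Path t B"
      using Node.prems(2) by auto
    have sends_m: "B'' i h = m" if "B'' \<in> P" for B''
      using agree[OF Node.prems(1) on_paths Node.prems(3) that] by (simp add: m_def)
    have "m \<in> M"
      using valid[OF Node.prems(3)] Node.prems(1) by (auto simp: m_def valid_profile_def valid_beh_def)
    then have child: "subtree t (h @ [m]) = Some (c m)"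
      using subtree_append[OF Node.prems(1), of "[m]"] by simp
    have "\<forall>B''\<in>P. run t [] B'' = run (c m) (h @ [m]) B'' \<and> path_nodes (c m) (h @ [m]) B'' \<subseteq> Path t B''"
    proof
      fix B'' assume "B'' \<in> P"
      then have "run t [] B'' = run (Node i M c) h B''"
        and "path_nodes (Node i M c) h B'' \<subseteq> Path t B''"
        using Node.prems(2) by blast+
      then show "run t [] B'' = run (c m) (h @ [m]) B'' \<and> path_nodes (c m) (h @ [m]) B'' \<subseteq> Path t B''"
        using sends_m[OF \<open>B'' \<in> P\<close>] by auto
    qed
    from Node.IH[OF rangeI child this Node.prems(3,4)]
    have "run (c m) (h @ [m]) B = run (c m) (h @ [m]) B'" .
    then show ?case
      using sends_m[OF Node.prems(3)] sends_m[OF Node.prems(4)] by simp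
  qed
  show ?thesis
    by (rule same_below[of "[]" t]) (use assms(3,4) in \<open>auto simp: Path_def\<close>)
qed

lemma OPT_ge:
  assumes "a + b \<le> (2::nat)"
  shows "vp i a + vp (\<not> i) b \<le> OPT vp"
proof -
  have fin: "finite {(a, b). a + b \<le> (2::nat)}"
    by (rule finite_subset[of _ "{..2::nat} \<times> {..2::nat}"]) auto
  have "vp False a' + vp True b' \<le> OPT vp" if "a' + b' \<le> 2" for a' b'
    unfolding OPT_def using fin that by (intro Max_ge) (auto intro!: image_eqI[where x = "(a', b')"])
  then show ?thesis
    using assms by (cases i) (auto simp: add.commute)
qed

lemma welfare_eq:
  "welfare t S vp = vp i (alloc t (follow S vp) i) + vp (\<not> i) (alloc t (follow S vp) (\<not> i))"
  by (cases i) (auto simp: welfare_def)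

definition approximates :: "'m mech \<Rightarrow> 'm strategies \<Rightarrow> real \<Rightarrow> bool" where
  "approximates t S c \<longleftrightarrow> (\<forall>vp. (\<forall>j. valuation (vp j)) \<longrightarrow> OPT vp \<le> c * welfare t S vp)"

definition additive_val :: "real \<Rightarrow> nat \<Rightarrow> real" where
  "additive_val s n = (if n \<le> 2 then real n * s else 0)"

lemma additive_val_le_2 [simp]: "n \<le> 2 \<Longrightarrow> additive_val s n = real n * s"
  by (simp add: additive_val_def)

lemma valuation_additive_val: "0 \<le> s \<Longrightarrow> valuation (additive_val s)"
  by (auto simp: valuation_def additive_val_def)

definition pos_valuation :: "(nat \<Rightarrow> real) \<Rightarrow> bool" where
  "pos_valuation v \<longleftrightarrow> valuation v \<and> 0 < v 1"

lemma pos_valuation_additive_val: "0 < s \<Longrightarrow> pos_valuation (additive_val s)"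
  by (simp add: pos_valuation_def valuation_additive_val)

section \<open>Allocations forced by an approximation ratio below 2\<close>

lemma low_share_welfare_bound:
  fixes c s T :: real
  assumes "0 < s" "c < 2" "(2 - c) * T = 2 * s" "1 \<le> a" "a + b \<le> (2::nat)"
  shows "c * (real a * s + real b * T) < 2 * T"
proof -
  have T: "0 < T"
    using assms(1-3) by (metis zero_less_mult_iff diff_gt_0_iff_gt not_less_iff_gr_or_eq zero_less_numeral)
  consider "a = 1" "b \<le> 1" | "a = 2" "b = 0"
    using assms(4,5) by linarith
  then show ?thesis
  proof cases
    case 1
    show ?thesis
    proof (cases "c \<le> 0")
      case True
      have "c * (real a * s + real b * T) \<le> 0"
        using True assms(1) T by (intro mult_nonpos_nonneg) auto
      then show ?thesis using T by linarith
    next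
      case False
      have "c * (real a * s + real b * T) \<le> c * (s + T)"
        using False T 1 by (intro mult_left_mono) auto
      also have "\<dots> < 2 * s + c * T"
        using False assms(1,2) by (simp add: distrib_left)
      finally show ?thesis
        using assms(3) by (simp add: algebra_simps)
    qed
  next
    case 2
    have "0 \<le> (c - 1) * (c - 1)" by simp
    then have "c * (2 - c) \<le> 1" by (simp add: algebra_simps)
    then have "c * (2 - c) * T \<le> T"
      using T by (simp add: mult_right_mono[of _ 1, simplified])
    moreover have "c * (2 * s) = c * (2 - c) * T"
      by (simp only: mult.assoc assms(3))
    ultimately have "c * (2 * s) < 2 * T"
      using T by linarith
    then show ?thesis
      using 2 by simp
  qed
qed

lemma low_additive_bidder_gets_nothing:
  assumes "approximates t S c" "c < 2" "wf_mech t" "strategies_valid t S" "0 < s"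
  shows "alloc t (follow S ((\<lambda>_. additive_val (2 * s / (2 - c)))(i := additive_val s))) i = 0"
proof (rule ccontr)
  define T where "T = 2 * s / (2 - c)"
  define vp where "vp = (\<lambda>_. additive_val T)(i := additive_val s)"
  define a where "a = alloc t (follow S vp) i"
  define b where "b = alloc t (follow S vp) (\<not> i)"
  assume "alloc t (follow S ((\<lambda>_. additive_val (2 * s / (2 - c)))(i := additive_val s))) i \<noteq> 0"
  then have "1 \<le> a"
    by (simp add: a_def vp_def T_def)
  have T: "(2 - c) * T = 2 * s" "0 \<le> T"
    using assms(2,5) by (auto simp: T_def)
  have vals: "\<forall>j. valuation (vp j)"
    using T(2) assms(5) by (simp add: vp_def valuation_additive_val)
  have ab: "a + b \<le> 2"
    using alloc_feasible[OF assms(3) valid_profile_follow[OF assms(4) vals]] by (simp add: a_def b_def)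
  have "2 * T \<le> OPT vp"
    using OPT_ge[of 0 2 vp i] by (simp add: vp_def)
  also have "\<dots> \<le> c * welfare t S vp"
    using assms(1) vals by (simp add: approximates_def)
  also have "welfare t S vp = real a * s + real b * T"
    using welfare_eq[of t S vp i] ab by (simp add: a_def b_def vp_def)
  finally show False
    using low_share_welfare_bound[OF assms(5,2) T(1) \<open>1 \<le> a\<close> ab] by linarith
qed

lemma pos_valuation_bidder_gets_item:
  assumes "approximates t S c" "c < 2" "wf_mech t" "strategies_valid t S" "pos_valuation z"
  shows "1 \<le> alloc t (follow S ((\<lambda>_. additive_val (z 1 / 4))(i := z))) i"
proof (rule ccontr)
  define e where "e = z 1 / 4"
  define vp where "vp = (\<lambda>_. additive_val e)(i := z)"
  define b where "b = alloc t (follow S vp) (\<not> i)"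
  have z: "valuation z" "0 < z 1" "z 0 = 0"
    using assms(5) by (auto simp: pos_valuation_def valuation_def)
  assume "\<not> 1 \<le> alloc t (follow S ((\<lambda>_. additive_val (z 1 / 4))(i := z))) i"
  then have a: "alloc t (follow S vp) i = 0"
    by (simp add: vp_def e_def)
  have vals: "\<forall>j. valuation (vp j)"
    using z by (simp add: vp_def e_def valuation_additive_val)
  have "b \<le> 2"
    using alloc_feasible[OF assms(3) valid_profile_follow[OF assms(4) vals], of i] a by (simp add: b_def)
  have "z 1 + e \<le> OPT vp"
    using OPT_ge[of 1 1 vp i] by (simp add: vp_def)
  also have "\<dots> \<le> c * welfare t S vp"
    using assms(1) vals by (simp add: approximates_def)
  also have "welfare t S vp = real b * e"
    using welfare_eq[of t S vp i] a z(3) \<open>b \<le> 2\<close> by (simp add: b_def vp_def)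
  also have "c * (real b * e) \<le> 2 * (real b * e)"
    using assms(2) z(2) by (intro mult_right_mono) (auto simp: e_def)
  also have "\<dots> \<le> 4 * e"
    using \<open>b \<le> 2\<close> z(2) by (simp add: e_def)
  finally show False
    using z(2) by (simp add: e_def)
qed

lemma mimicking_pays_off:
  assumes "approximates t S c" "c < 2" "wf_mech t" "strategies_valid t S" "indiv_rational t S"
    and z: "pos_valuation z" and below: "z 1 < s" "z 2 < 2 * s"
  shows "0 < utility t (additive_val s) i (follow S ((\<lambda>_. additive_val (z 1 / 4))(i := z)))"
proof -
  define vq where "vq = (\<lambda>_. additive_val (z 1 / 4))(i := z)"
  define a where "a = alloc t (follow S vq) i"
  have vals: "\<forall>j. valuation (vq j)"
    using z by (auto simp: vq_def pos_valuation_def intro!: valuation_additive_val)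
  have "1 \<le> a"
    using pos_valuation_bidder_gets_item[OF assms(1-4) z, of i] by (simp add: a_def vq_def)
  moreover have "a \<le> 2"
    using alloc_feasible[OF assms(3) valid_profile_follow[OF assms(4) vals], of i]
    unfolding a_def by linarith
  ultimately have "a = 1 \<or> a = 2"
    by linarith
  then have "z a < additive_val s a"
    using below by auto
  moreover have "0 \<le> utility t (vq i) i (follow S vq)"
    using assms(5) vals unfolding indiv_rational_def by blast
  ultimately show ?thesis
    by (simp add: utility_def a_def vq_def)
qed

section \<open>Obvious strategy-proofness forces pooling\<close>

lemma OSP_pools_with_additive:
  assumes approx: "approximates t S c" and "c < 2" and wf: "wf_mech t" and sv: "strategies_valid t S"
    and osp: "OSP t S" and ir: "indiv_rational t S" and nnt: "no_negative_transfers t"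
    and node: "subtree t h = Some (Node i M cc)"
    and on_path: "\<forall>vp. (\<forall>j. pos_valuation (vp j)) \<longrightarrow> h \<in> Path t (follow S vp)"
    and z: "pos_valuation z" and below: "z 1 < s" "z 2 < 2 * s"
  shows "S i z h = S i (additive_val s) h"
proof (rule ccontr)
  assume deviates: "S i z h \<noteq> S i (additive_val s) h"
  have "0 < s"
    using z below by (simp add: pos_valuation_def)
  define T where "T = 2 * s / (2 - c)"
  define vp where "vp = (\<lambda>_. additive_val T)(i := additive_val s)"
  define vq where "vq = (\<lambda>_. additive_val (z 1 / 4))(i := z)"
  have pos: "\<forall>j. pos_valuation (vp j)" "\<forall>j. pos_valuation (vq j)"
    using \<open>0 < s\<close> \<open>c < 2\<close> z by (auto simp: vp_def vq_def T_def pos_valuation_def intro!: valuation_additive_val)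
  then have vals: "\<forall>j. valuation (vp j)" "\<forall>j. valuation (vq j)"
    by (simp_all add: pos_valuation_def)
  define B where "B = follow S vp"
  define B' where "B' = follow S vq"
  have valid: "valid_profile t B" "valid_profile t B'"
    using valid_profile_follow[OF sv] vals by (simp_all add: B_def B'_def)
  have "alloc t B i = 0"
    using low_additive_bidder_gets_nothing[OF approx \<open>c < 2\<close> wf sv \<open>0 < s\<close>] by (simp add: B_def vp_def T_def)
  then have truthful: "utility t (additive_val s) i B \<le> 0"
    using pay_nonneg[OF nnt valid(1)] by (simp add: utility_def)
  have mimicking: "0 < utility t (additive_val s) i B'"
    using mimicking_pays_off[OF approx \<open>c < 2\<close> wf sv ir z below] by (simp add: B'_def vq_def)
  have "B(i := S i (additive_val s)) = B"
    by (auto simp: B_def follow_def vp_def)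
  moreover have "h \<in> Path t B" "h \<in> Path t B'"
    using on_path pos by (simp_all add: B_def B'_def)
  moreover have "B' i h \<noteq> S i (additive_val s) h"
    using deviates by (simp add: B'_def follow_def vq_def)
  ultimately have "utility t (additive_val s) i B' \<le> utility t (additive_val s) i B"
    using osp valuation_additive_val[of s] \<open>0 < s\<close> node valid unfolding OSP_def by fastforce
  then show False
    using truthful mimicking by linarith
qed

lemma OSP_messages_agree:
  assumes "approximates t S c" "c < 2" "wf_mech t" "strategies_valid t S"
    "OSP t S" "indiv_rational t S" "no_negative_transfers t"
    and "subtree t h = Some (Node i M cc)"
    and "\<forall>vp. (\<forall>j. pos_valuation (vp j)) \<longrightarrow> h \<in> Path t (follow S vp)"
    and x: "pos_valuation x" and y: "pos_valuation y"
  shows "S i x h = S i y h"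
proof -
  define s where "s = x 1 + x 2 + y 1 + y 2 + 1"
  have "0 \<le> x 1" "0 \<le> x 2" "0 \<le> y 1" "0 \<le> y 2"
    using x y by (auto simp: pos_valuation_def valuation_def)
  then have "S i x h = S i (additive_val s) h" "S i y h = S i (additive_val s) h"
    using OSP_pools_with_additive[OF assms(1-9)] x y by (simp_all add: s_def)
  then show ?thesis by simp
qed

lemma OSP_positive_profiles_same_outcome:
  assumes "approximates t S c" "c < 2" "wf_mech t" "strategies_valid t S"
    "OSP t S" "indiv_rational t S" "no_negative_transfers t"
    and "\<forall>j. pos_valuation (vp j)" "\<forall>j. pos_valuation (vq j)"
  shows "run t [] (follow S vp) = run t [] (follow S vq)"
proof (rule run_eq_if_messages_agree)
  let ?P = "{follow S vp | vp. \<forall>j. pos_valuation (vp j)}"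
  show "follow S vp \<in> ?P" "follow S vq \<in> ?P"
    using assms(8,9) by blast+
  show "valid_profile t B" if "B \<in> ?P" for B
    using that valid_profile_follow[OF assms(4)] by (auto simp: pos_valuation_def)
  show "B i h = B' i h"
    if node: "subtree t h = Some (Node i M cc)" and on_paths: "\<forall>B\<in>?P. h \<in> Path t B"
      and "B \<in> ?P" "B' \<in> ?P" for h i M cc B B'
  proof -
    obtain wp wq where "B = follow S wp" "\<forall>j. pos_valuation (wp j)"
      and "B' = follow S wq" "\<forall>j. pos_valuation (wq j)"
      using \<open>B \<in> ?P\<close> \<open>B' \<in> ?P\<close> by blast
    moreover have "\<forall>vp. (\<forall>j. pos_valuation (vp j)) \<longrightarrow> h \<in> Path t (follow S vp)"
      using on_paths by blast
    ultimately show ?thesis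
      using OSP_messages_agree[OF assms(1-7) node] by (simp add: follow_def)
  qed
qed

theorem no_OSP_approximation_below_2:
  assumes "approximates t S c" "c < 2" "wf_mech t" "strategies_valid t S"
    "OSP t S" "indiv_rational t S" "no_negative_transfers t"
  shows False
proof -
  define T where "T = 2 / (2 - c)"
  define vp where "vp = (\<lambda>_. additive_val T)(False := additive_val 1)"
  define vq where "vq = (\<lambda>_. additive_val T)(True := additive_val 1)"
  have "0 < T"
    using assms(2) by (simp add: T_def)
  then have pos: "\<forall>j. pos_valuation (vp j)" "\<forall>j. pos_valuation (vq j)"
    by (simp_all add: vp_def vq_def pos_valuation_additive_val)
  have "alloc t (follow S vp) False = 0" "alloc t (follow S vq) True = 0"
    using low_additive_bidder_gets_nothing[OF assms(1-4), of 1] by (simp_all add: vp_def vq_def T_def)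
  moreover have "alloc t (follow S vp) = alloc t (follow S vq)"
    using OSP_positive_profiles_same_outcome[OF assms pos] by (simp add: alloc_def)
  ultimately have "welfare t S vp = 0"
    by (simp add: welfare_def vp_def)
  moreover have "2 * T \<le> OPT vp"
    using OPT_ge[of 0 2 vp False] by (simp add: vp_def)
  moreover have "OPT vp \<le> c * welfare t S vp"
    using assms(1) pos(1) by (simp add: approximates_def pos_valuation_def)
  ultimately show False
    using \<open>0 < T\<close> by simp
qed

theorem theorem3p12:
  fixes t :: "'m mech" and S :: "'m strategies"
  assumes "wf_mech t"
    and "strategies_valid t S"
    and "OSP t S"
    and "indiv_rational t S"
    and "no_negative_transfers t"
  shows "\<forall>c::real. c < 2 \<longrightarrow>
           (\<exists>vp. (\<forall>j. valuation (vp j)) \<and> OPT vp > c * welfare t S vp)"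
proof (intro allI impI)
  fix c :: real
  assume "c < 2"
  show "\<exists>vp. (\<forall>j. valuation (vp j)) \<and> OPT vp > c * welfare t S vp"
  proof (rule ccontr)
    assume "\<not> ?thesis"
    then have "approximates t S c"
      by (auto simp: approximates_def not_less)
    with \<open>c < 2\<close> assms show False
      by (intro no_OSP_approximation_below_2)
  qed
qed

end
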